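(* Let $q=4$, $B=A$, $|A|=m-1$, and put $\theta=2^{4m+2|C|-3}$. Then $\mathcal C_{\overline{\mathcal N}_2}$ is a projective $3$-weight code over $\mathbb F_4$ with parameters $[\theta,\ 2m+|C|,\ \theta/2]$ whose nonzero Hamming weights are $w_1=\theta/2$, $w_2=3\theta/4$, $w_3=\theta$ with frequencies $6$, $4^{2m+|C|}-16$ and $9$, respectively. In particular $w_1+w_2+w_3=\frac{9}{4}\theta$.
   Context: $\mathbb F_4$ is the field with four elements (so $q=4$), $\mathbb F_4^*=\mathbb F_4\setminus\{0\}$, $m\ge2$, $[m]=\{1,\dots,m\}$, $\mathrm{supp}(v)=\{i:v_i\ne0\}$. For nonempty $P\subseteq[m]$, $\Delta_P=\{v\in\mathbb F_q^m:\mathrm{supp}(v)\subseteq P\}$, $\Delta_P^c=\mathbb F_q^m\setminus\Delta_P$. $A,B,C$ are nonempty subsets of $[m]$. Let $\mathcal N_2=\{(w_2+\omega,w_3,w_1)\in\mathbb F_q^{3m}: w_1\in\Delta_A^c,\ w_2\in\Delta_B,\ w_3\in\Delta_C,\ \omega\in\{\mathbf 0,w_1\}\}$ (closed under multiplication by $\mathbb F_q^*$), let $\overline{\mathcal N}_2$ be a set containing exactly one element of each class $\{\alpha x:\alpha\in\mathbb F_q^*\}$, $x\in\mathcal N_2$, and let $\mathcal C_{\overline{\mathcal N}_2}$ be the linear code over $\mathbb F_q$ spanned by the rows of the $3m\times|\overline{\mathcal N}_2|$ matrix whose columns are the elements of $\overline{\mathcal N}_2$. A code is projective if its dual has minimum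 distance at least $3$. *)

theory Defs
  imports Main "HOL.Vector_Spaces" "HOL-Library.Function_Algebras"
begin

definition vecs :: "nat \<Rightarrow> (nat \<Rightarrow> 'a::zero) set" where
  "vecs m = {v. \<forall>i. v i \<noteq> 0 \<longrightarrow> i \<in> {1..m}}"

definition supp :: "(nat \<Rightarrow> 'a::zero) \<Rightarrow> nat set" where
  "supp v = {i. v i \<noteq> 0}"

definition Delta :: "nat \<Rightarrow> nat set \<Rightarrow> (nat \<Rightarrow> 'a::zero) set" where
  "Delta m P = {v \<in> vecs m. supp v \<subseteq> P}"

definition Deltac :: "nat \<Rightarrow> nat set \<Rightarrow> (nat \<Rightarrow> 'a::zero) set" where
  "Deltac m P = vecs m - Delta m P"

type_synonym 'a col = "(nat \<Rightarrow> 'a) \<times> (nat \<Rightarrow> 'a) \<times> (nat \<Rightarrow> 'a)"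

text \<open>Elements of F_q^{3m} written as triples (u,v,w) of vectors of F_q^m.\<close>
definition N2 :: "nat \<Rightarrow> nat set \<Rightarrow> nat set \<Rightarrow> nat set \<Rightarrow> ('a::field) col set" where
  "N2 m A B C = {((\<lambda>i. w2 i + \<omega> i), w3, w1) | w1 w2 w3 \<omega>.
      w1 \<in> Deltac m A \<and> w2 \<in> Delta m B \<and> w3 \<in> Delta m C \<and> \<omega> \<in> {(\<lambda>i. 0), w1}}"

definition smult_col :: "'a::field \<Rightarrow> 'a col \<Rightarrow> 'a col" where
  "smult_col \<alpha> x = (case x of (u, v, w) \<Rightarrow> ((\<lambda>i. \<alpha> * u i), (\<lambda>i. \<alpha> * v i), (\<lambda>i. \<alpha> * w i)))"

definition is_projection_set :: "'a::field col set \<Rightarrow> 'a col set \<Rightarrow> bool" where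
  "is_projection_set N Nbar \<longleftrightarrow>
     (\<forall>y\<in>Nbar. \<exists>x\<in>N. \<exists>\<alpha>. \<alpha> \<noteq> 0 \<and> y = smult_col \<alpha> x) \<and>
     (\<forall>x\<in>N. \<exists>!y. y \<in> Nbar \<and> (\<exists>\<alpha>. \<alpha> \<noteq> 0 \<and> y = smult_col \<alpha> x))"

text \<open>Coordinate j \<in> [3m] of a column: (k,i) with k<3, i \<in> [m].\<close>
definition coord :: "nat \<Rightarrow> nat \<Rightarrow> 'a col \<Rightarrow> 'a" where
  "coord k i x = (case x of (u, v, w) \<Rightarrow> (if k = 0 then u i else if k = 1 then v i else w i))"

text \<open>Words of length |Nbar| are functions on columns, vanishing outside Nbar.\<close>
definition fscale :: "'a::field \<Rightarrow> ('c \<Rightarrow> 'a) \<Rightarrow> ('c \<Rightarrow> 'a)" where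
  "fscale a f = (\<lambda>c. a * f c)"

definition gen_rows :: "nat \<Rightarrow> 'a::field col set \<Rightarrow> ('a col \<Rightarrow> 'a) set" where
  "gen_rows m Nbar = {(\<lambda>c. if c \<in> Nbar then coord k i c else 0) | k i. k < 3 \<and> i \<in> {1..m}}"

definition code_of :: "nat \<Rightarrow> 'a::field col set \<Rightarrow> ('a col \<Rightarrow> 'a) set" where
  "code_of m Nbar = module.span fscale (gen_rows m Nbar)"

definition hweight :: "'c set \<Rightarrow> ('c \<Rightarrow> 'a::zero) \<Rightarrow> nat" where
  "hweight S f = card {c \<in> S. f c \<noteq> 0}"

definition code_dim :: "('c \<Rightarrow> 'a::field) set \<Rightarrow> nat" where
  "code_dim Cd = vector_space.dim fscale Cd"

definition min_dist :: "'c set \<Rightarrow> ('c \<Rightarrow> 'a::zero) set \<Rightarrow> nat" where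
  "min_dist S Cd = Min {hweight S f | f. f \<in> Cd \<and> f \<noteq> 0}"

definition dual_code :: "'c set \<Rightarrow> ('c \<Rightarrow> 'a::field) set \<Rightarrow> ('c \<Rightarrow> 'a) set" where
  "dual_code S Cd = {y. (\<forall>c. c \<notin> S \<longrightarrow> y c = 0) \<and> (\<forall>f\<in>Cd. (\<Sum>c\<in>S. y c * f c) = 0)}"

definition projective :: "'c set \<Rightarrow> ('c \<Rightarrow> 'a::field) set \<Rightarrow> bool" where
  "projective S Cd \<longleftrightarrow> (\<forall>y\<in>dual_code S Cd. y \<noteq> 0 \<longrightarrow> hweight S y \<ge> 3)"

definition weight_freq :: "'c set \<Rightarrow> ('c \<Rightarrow> 'a::zero) set \<Rightarrow> nat \<Rightarrow> nat" where
  "weight_freq S Cd w = card {f \<in> Cd. f \<noteq> 0 \<and> hweight S f = w}"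

end

(* Write the columns of N2 as N2_col (e, w1, w2, w3) with (w1, w2, w3) in
   Deltac A x Delta A x Delta C, where e chooses omega = w1 or omega = 0. Since A misses exactly one
   index j and w1 j <> 0, this parametrisation is injective, and Nbar contains a third of these columns.

   A code word is a linear form t in the 3m coordinates evaluated on Nbar. If t involves a
   coordinate that varies freely over the parameters (an entry of w2 or w3, or an entry of w1 other
   than w1 j), translating along that coordinate shows that t is equidistributed, so it is nonzero
   on 3/4 of the columns: weight 3 theta / 4. Otherwise t reduces to (t(2,j) + e t(0,j)) w1 j, of
   weight theta/2 or theta according to whether one or both of t(2,j) and t(2,j) + t(0,j) are
   nonzero; counting these pairs over F_4 gives the frequencies 6 and 9. As weight 0 forces t to
   vanish on the 2m + |C| coordinates that matter, the code has that dimension, and it is projective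
   because the columns are nonzero and pairwise non-proportional. *)

theory Submission
  imports Defs "HOL-Library.FuncSet"
begin

section \<open>Counting\<close>

lemma bij_betw_restrict_vanishing_outside:
  "bij_betw (\<lambda>f. restrict f S) {f :: 'b \<Rightarrow> 'a::zero. \<forall>x. x \<notin> S \<longrightarrow> f x = 0} (S \<rightarrow>\<^sub>E UNIV)"
  by (rule bij_betw_byWitness[where f' = "\<lambda>g x. if x \<in> S then g x else 0"])
    (auto simp: fun_eq_iff PiE_def extensional_def)

lemma
  assumes "finite S"
  shows card_vanishing_outside:
      "card {f :: 'b \<Rightarrow> 'a::{zero,finite}. \<forall>x. x \<notin> S \<longrightarrow> f x = 0} = card (UNIV :: 'a set) ^ card S"
    and finite_vanishing_outside:
      "finite {f :: 'b \<Rightarrow> 'a::{zero,finite}. \<forall>x. x \<notin> S \<longrightarrow> f x = 0}"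
proof -
  have bij: "bij_betw (\<lambda>f. restrict f S) {f :: 'b \<Rightarrow> 'a. \<forall>x. x \<notin> S \<longrightarrow> f x = 0} (S \<rightarrow>\<^sub>E UNIV)"
    by (rule bij_betw_restrict_vanishing_outside)
  show "card {f :: 'b \<Rightarrow> 'a. \<forall>x. x \<notin> S \<longrightarrow> f x = 0} = card (UNIV :: 'a set) ^ card S"
    using bij_betw_same_card[OF bij] assms by (simp add: card_funcsetE)
  show "finite {f :: 'b \<Rightarrow> 'a. \<forall>x. x \<notin> S \<longrightarrow> f x = 0}"
    using bij_betw_finite[OF bij] assms by (simp add: finite_PiE)
qed

lemma Delta_eq: "P \<subseteq> {1..m} \<Longrightarrow> Delta m P = {v. \<forall>i. i \<notin> P \<longrightarrow> v i = 0}"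
  by (auto simp: Delta_def vecs_def supp_def)

lemma Delta_full: "Delta m {1..m} = vecs m"
  by (auto simp: Delta_def vecs_def supp_def)

lemma Delta_add_scaled:
  fixes w u :: "nat \<Rightarrow> 'a::semiring_0"
  shows "P \<subseteq> {1..m} \<Longrightarrow> w \<in> Delta m P \<Longrightarrow> u \<in> Delta m P \<Longrightarrow> (\<lambda>i. w i + d * u i) \<in> Delta m P"
  by (simp add: Delta_eq)

lemma
  assumes "P \<subseteq> {1..m}"
  shows card_Delta: "card (Delta m P :: (nat \<Rightarrow> 'a::{zero,finite}) set) = card (UNIV :: 'a set) ^ card P"
    and finite_Delta: "finite (Delta m P :: (nat \<Rightarrow> 'a::{zero,finite}) set)"
  using card_vanishing_outside finite_vanishing_outside finite_subset[OF assms]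
  by (simp_all add: Delta_eq[OF assms])

lemma
  assumes "P \<subseteq> {1..m}"
  shows card_Deltac:
      "card (Deltac m P :: (nat \<Rightarrow> 'a::{zero,finite}) set) = card (UNIV :: 'a set) ^ m - card (UNIV :: 'a set) ^ card P"
    and finite_Deltac: "finite (Deltac m P :: (nat \<Rightarrow> 'a::{zero,finite}) set)"
proof -
  have "Delta m P \<subseteq> (Delta m {1..m} :: (nat \<Rightarrow> 'a) set)"
    using assms by (auto simp: Delta_def)
  then show "card (Deltac m P :: (nat \<Rightarrow> 'a) set) = card (UNIV :: 'a set) ^ m - card (UNIV :: 'a set) ^ card P"
    unfolding Deltac_def Delta_full[symmetric]
    using assms by (simp add: card_Diff_subset finite_Delta card_Delta)
  show "finite (Deltac m P :: (nat \<Rightarrow> 'a) set)"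
    unfolding Deltac_def Delta_full[symmetric] by (simp add: finite_Delta)
qed

text \<open>\<open>\<tau> d\<close> maps the zero fibre of \<open>\<phi>\<close> bijectively onto the fibre of \<open>d\<close>, so all fibres
  have the same size.\<close>
lemma card_nonzero_if_shift_action:
  fixes \<phi> :: "'s \<Rightarrow> 'a::{ab_group_add,finite}"
  assumes S: "finite S"
    and into: "\<And>d s. s \<in> S \<Longrightarrow> \<tau> d s \<in> S"
    and shift: "\<And>d s. s \<in> S \<Longrightarrow> \<phi> (\<tau> d s) = \<phi> s + d"
    and inv: "\<And>d s. s \<in> S \<Longrightarrow> \<tau> (- d) (\<tau> d s) = s"
  shows "card (UNIV :: 'a set) * card {s \<in> S. \<phi> s \<noteq> 0} = (card (UNIV :: 'a set) - 1) * card S"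
proof -
  define k where "k y = card {s \<in> S. \<phi> s = y}" for y
  have k_const: "k y = k 0" for y
  proof -
    have "bij_betw (\<tau> y) {s \<in> S. \<phi> s = 0} {s \<in> S. \<phi> s = y}"
      by (rule bij_betw_byWitness[where f' = "\<tau> (- y)"])
        (use into shift inv inv[of _ "- y"] in auto)
    then show ?thesis unfolding k_def by (simp add: bij_betw_same_card)
  qed
  have "card S = card (\<Union>y. {s \<in> S. \<phi> s = y})"
    by (rule arg_cong[where f = card]) auto
  also have "\<dots> = (\<Sum>y\<in>UNIV. k y)"
    unfolding k_def by (rule card_UN_disjoint) (use S in auto)
  also have "\<dots> = (\<Sum>y\<in>(UNIV :: 'a set). k 0)"
    by (rule sum.cong) (auto intro: k_const)
  also have "\<dots> = card (UNIV :: 'a set) * k 0"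
    by simp
  finally have card_S: "card S = card (UNIV :: 'a set) * k 0" .
  have "card {s \<in> S. \<phi> s \<noteq> 0} = card (S - {s \<in> S. \<phi> s = 0})"
    by (rule arg_cong[where f = card]) auto
  also have "\<dots> = card S - k 0"
    unfolding k_def using S by (simp add: card_Diff_subset)
  finally show ?thesis
    using card_S by (simp add: algebra_simps diff_mult_distrib2)
qed

lemma card_pairs_one_nonzero:
  "card {(a, c :: 'a::{field,finite}). of_bool (c \<noteq> 0) + of_bool (c + a \<noteq> 0) = (1::nat)} =
    2 * (card (UNIV :: 'a set) - 1)"
proof -
  let ?X = "(\<lambda>a :: 'a. (a, 0 :: 'a)) ` (UNIV - {0})" and ?Y = "(\<lambda>c :: 'a. (- c, c)) ` (UNIV - {0})"
  have "{(a, c :: 'a). of_bool (c \<noteq> 0) + of_bool (c + a \<noteq> 0) = (1::nat)} = ?X \<union> ?Y"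
    by (auto simp: image_iff add_eq_0_iff)
  moreover have "card (?X \<union> ?Y) = card ?X + card ?Y"
    by (rule card_Un_disjoint) auto
  moreover have "card ?X = card (UNIV :: 'a set) - 1" "card ?Y = card (UNIV :: 'a set) - 1"
    by (subst card_image, auto intro: inj_onI simp: card_Diff_singleton)+
  ultimately show ?thesis by simp
qed

lemma card_pairs_two_nonzero:
  "card {(a, c :: 'a::{field,finite}). of_bool (c \<noteq> 0) + of_bool (c + a \<noteq> 0) = (2::nat)} =
    (card (UNIV :: 'a set) - 1)\<^sup>2"
proof -
  have "{(a, c :: 'a). of_bool (c \<noteq> 0) + of_bool (c + a \<noteq> 0) = (2::nat)} =
      (\<lambda>(c, a). (a, c)) ` (SIGMA c:UNIV - {0}. UNIV - {- c})"
    by (auto simp: image_iff add_eq_0_iff)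
  moreover have "card (SIGMA c:UNIV - {0 :: 'a}. UNIV - {- c}) = (card (UNIV :: 'a set) - 1)\<^sup>2"
    by (simp add: card_SigmaI card_Diff_singleton power2_eq_square)
  ultimately show ?thesis
    by (simp add: card_image inj_on_def)
qed

section \<open>Columns and code words\<close>

lemma smult_col_simp [simp]:
  "smult_col \<alpha> (u, v, w) = ((\<lambda>i. \<alpha> * u i), (\<lambda>i. \<alpha> * v i), (\<lambda>i. \<alpha> * w i))"
  by (simp add: smult_col_def)

lemma smult_col_smult_col: "smult_col \<alpha> (smult_col \<beta> x) = smult_col (\<alpha> * \<beta>) x"
  by (cases x) (simp add: mult.assoc)

lemma smult_col_one [simp]: "smult_col 1 x = x"
  by (cases x) simp

lemma smult_col_cancel:
  assumes "x \<noteq> (\<lambda>_. 0, \<lambda>_. 0, \<lambda>_. 0)" and "smult_col \<alpha> x = smult_col \<beta> x"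
  shows "\<alpha> = \<beta>"
proof -
  obtain u v w where x: "x = (u, v, w)" by (cases x)
  from assms(1) obtain i where "u i \<noteq> 0 \<or> v i \<noteq> 0 \<or> w i \<noteq> 0"
    unfolding x by (auto simp: fun_eq_iff)
  moreover have "\<alpha> * u i = \<beta> * u i" "\<alpha> * v i = \<beta> * v i" "\<alpha> * w i = \<beta> * w i"
    using assms(2) unfolding x by (auto simp: fun_eq_iff)
  ultimately show ?thesis by auto
qed

lemma coord_smult_col [simp]: "coord k i (smult_col \<alpha> x) = \<alpha> * coord k i x"
  by (cases x) (simp add: coord_def)

lemma col_eqI:
  assumes "x \<in> vecs m \<times> vecs m \<times> vecs m" "y \<in> vecs m \<times> vecs m \<times> vecs m"
    and "\<And>k i. k < 3 \<Longrightarrow> i \<in> {1..m} \<Longrightarrow> coord k i x = coord k i y"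
  shows "x = y"
proof -
  obtain u v w u' v' w' where xy: "x = (u, v, w)" "y = (u', v', w')" by (cases x, cases y)
  have "u i = u' i \<and> v i = v' i \<and> w i = w' i" for i
  proof (cases "i \<in> {1..m}")
    case True
    then show ?thesis using assms(3)[of 0 i] assms(3)[of 1 i] assms(3)[of 2 i]
      by (simp add: xy coord_def)
  next
    case False
    with assms(1,2) have "u i = 0 \<and> u' i = 0 \<and> v i = 0 \<and> v' i = 0 \<and> w i = 0 \<and> w' i = 0"
      unfolding xy vecs_def by blast
    then show ?thesis by simp
  qed
  then show ?thesis by (simp add: xy fun_eq_iff)
qed

lemma sum_fun_apply: "(sum f S) x = (\<Sum>i\<in>S. f i x)"
  by (induction S rule: infinite_finite_induct) auto

lemma vector_space_fscale: "vector_space (fscale :: 'a::field \<Rightarrow> ('c \<Rightarrow> 'a) \<Rightarrow> _)"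
  by unfold_locales (auto simp: fscale_def fun_eq_iff algebra_simps)

lemma module_fscale: "module (fscale :: 'a::field \<Rightarrow> ('c \<Rightarrow> 'a) \<Rightarrow> _)"
  using vector_space_fscale module_iff_vector_space by blast

lemma sum_times_delta:
  "finite I \<Longrightarrow> i \<in> I \<Longrightarrow> (\<Sum>k\<in>I. f k * (if k = i then c else 0)) = f i * (c :: 'a::semiring_0)"
  by (simp add: if_distrib[where f = "\<lambda>x. _ * x"] sum.delta cong: if_cong)

definition lincomb :: "nat \<Rightarrow> (nat \<times> nat \<Rightarrow> 'a::field) \<Rightarrow> 'a col \<Rightarrow> 'a" where
  "lincomb m t x = (\<Sum>p\<in>{..<3} \<times> {1..m}. t p * coord (fst p) (snd p) x)"

definition code_word :: "nat \<Rightarrow> 'a col set \<Rightarrow> (nat \<times> nat \<Rightarrow> 'a::field) \<Rightarrow> 'a col \<Rightarrow> 'a" where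
  "code_word m Nb t = (\<lambda>c. if c \<in> Nb then lincomb m t c else 0)"

definition gen_row :: "'a col set \<Rightarrow> nat \<times> nat \<Rightarrow> 'a col \<Rightarrow> 'a::zero" where
  "gen_row Nb p = (\<lambda>c. if c \<in> Nb then coord (fst p) (snd p) c else 0)"

lemma lincomb_smult_col: "lincomb m t (smult_col \<alpha> x) = \<alpha> * lincomb m t x"
  by (simp add: lincomb_def sum_distrib_left algebra_simps)

lemma lincomb_expand:
  "lincomb m t (u, v, w) = (\<Sum>i\<in>{1..m}. t (0, i) * u i + t (1, i) * v i + t (2, i) * w i)"
proof -
  have "lincomb m t (u, v, w) = (\<Sum>k<3. \<Sum>i\<in>{1..m}. t (k, i) * coord k i (u, v, w))"
    unfolding lincomb_def by (simp add: sum.cartesian_product case_prod_beta)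
  also have "\<dots> = (\<Sum>i\<in>{1..m}. \<Sum>k<3. t (k, i) * coord k i (u, v, w))"
    by (rule sum.swap)
  finally show ?thesis
    by (simp add: eval_nat_numeral coord_def add.assoc)
qed

lemma code_word_eq_sum_gen_rows:
  "code_word m Nb t = (\<Sum>p\<in>{..<3} \<times> {1..m}. fscale (t p) (gen_row Nb p))"
  by (auto simp: fun_eq_iff sum_fun_apply fscale_def code_word_def gen_row_def lincomb_def)

lemma code_word_add: "code_word m Nb (\<lambda>p. t p + t' p) = code_word m Nb t + code_word m Nb t'"
  by (auto simp: fun_eq_iff code_word_def lincomb_def sum.distrib algebra_simps)

lemma code_word_diff: "code_word m Nb (\<lambda>p. t p - t' p) = code_word m Nb t - code_word m Nb t'"
  by (auto simp: fun_eq_iff code_word_def lincomb_def sum_subtractf algebra_simps)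

lemma code_word_scale: "code_word m Nb (\<lambda>p. a * t p) = fscale a (code_word m Nb t)"
  by (auto simp: fun_eq_iff code_word_def lincomb_def fscale_def sum_distrib_left algebra_simps)

lemma code_word_zero [simp]: "code_word m Nb (\<lambda>p. 0) = 0"
  by (auto simp: fun_eq_iff code_word_def lincomb_def)

lemma gen_row_eq_code_word:
  assumes "p \<in> {..<3} \<times> {1..m}"
  shows "gen_row Nb p = code_word m Nb (\<lambda>q. if q = p then 1 else 0)"
proof -
  have "code_word m Nb (\<lambda>q. if q = p then 1 else 0) =
      (\<Sum>q\<in>{..<3} \<times> {1..m}. if q = p then gen_row Nb q else 0)"
    unfolding code_word_eq_sum_gen_rows by (rule sum.cong) (auto simp: fscale_def fun_eq_iff)
  also have "\<dots> = gen_row Nb p" using assms by (simp add: sum.delta')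
  finally show ?thesis by simp
qed

lemma gen_rows_eq: "gen_rows m Nb = gen_row Nb ` ({..<3} \<times> {1..m})"
  unfolding gen_rows_def gen_row_def by force

lemma code_of_eq_range_code_word: "code_of m Nb = range (code_word m Nb)"
proof
  have "module.subspace fscale (range (code_word m Nb))"
    unfolding module.subspace_def[OF module_fscale]
  proof (intro conjI ballI allI)
    show "0 \<in> range (code_word m Nb)"
      using rangeI[of "code_word m Nb" "\<lambda>p. 0"] by simp
  next
    fix f g assume "f \<in> range (code_word m Nb)" "g \<in> range (code_word m Nb)"
    then obtain t t' where "f = code_word m Nb t" "g = code_word m Nb t'" by blast
    then show "f + g \<in> range (code_word m Nb)"
      using rangeI[of "code_word m Nb" "\<lambda>p. t p + t' p"] by (simp add: code_word_add)
  next
    fix c f assume "f \<in> range (code_word m Nb)"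
    then obtain t where "f = code_word m Nb t" by blast
    then show "fscale c f \<in> range (code_word m Nb)"
      using rangeI[of "code_word m Nb" "\<lambda>p. c * t p"] by (simp add: code_word_scale)
  qed
  moreover have "gen_rows m Nb \<subseteq> range (code_word m Nb)"
    unfolding gen_rows_eq using gen_row_eq_code_word by blast
  ultimately show "code_of m Nb \<subseteq> range (code_word m Nb)"
    unfolding code_of_def by (intro module.span_minimal[OF module_fscale])
  show "range (code_word m Nb) \<subseteq> code_of m Nb"
  proof clarify
    fix t
    show "code_word m Nb t \<in> code_of m Nb"
      unfolding code_of_def gen_rows_eq code_word_eq_sum_gen_rows
      by (intro module.span_sum[OF module_fscale] module.span_scale[OF module_fscale]
          module.span_base[OF module_fscale]) auto
  qed
qed

lemma gen_row_in_code_of: "p \<in> {..<3} \<times> {1..m} \<Longrightarrow> gen_row Nb p \<in> code_of m Nb"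
  unfolding code_of_def gen_rows_eq by (rule module.span_base[OF module_fscale]) (rule imageI)

lemma weight_freq_nonzero_imp_weight:
  "weight_freq S Cd w \<noteq> 0 \<Longrightarrow> w \<in> {hweight S f | f. f \<in> Cd \<and> f \<noteq> 0}"
proof -
  assume "weight_freq S Cd w \<noteq> 0"
  then have "{f \<in> Cd. f \<noteq> 0 \<and> hweight S f = w} \<noteq> {}"
    unfolding weight_freq_def by (intro notI) simp
  then show ?thesis by blast
qed

section \<open>Projection sets\<close>

locale projection_set =
  fixes N Nbar :: "'a::{field,finite} col set"
  assumes is_projection_set: "is_projection_set N Nbar"
    and smult_closed: "\<And>x \<alpha>. x \<in> N \<Longrightarrow> \<alpha> \<noteq> 0 \<Longrightarrow> smult_col \<alpha> x \<in> N"
    and zero_notin: "(\<lambda>_. 0, \<lambda>_. 0, \<lambda>_. 0) \<notin> N"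
begin

lemma Nbar_subset: "Nbar \<subseteq> N"
  using is_projection_set smult_closed unfolding is_projection_set_def by blast

lemma representative:
  assumes "x \<in> N" obtains \<alpha> where "\<alpha> \<noteq> 0" "smult_col \<alpha> x \<in> Nbar"
  using is_projection_set assms unfolding is_projection_set_def by blast

lemma eq_if_proportional:
  assumes "y \<in> Nbar" "y' \<in> Nbar" "y' = smult_col \<alpha> y" "\<alpha> \<noteq> 0"
  shows "y' = y"
proof -
  have "\<exists>!z. z \<in> Nbar \<and> (\<exists>\<beta>. \<beta> \<noteq> 0 \<and> z = smult_col \<beta> y)"
    using is_projection_set Nbar_subset assms(1) unfolding is_projection_set_def by blast
  moreover have "y = smult_col 1 y" by simp
  ultimately show ?thesis using assms by (metis one_neq_zero)
qed

text \<open>Every element of \<open>N\<close> is a unique nonzero multiple of a unique element of \<open>Nbar\<close>.\<close>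
lemma card_filter:
  assumes invariant: "\<And>x \<alpha>. \<alpha> \<noteq> 0 \<Longrightarrow> Pr (smult_col \<alpha> x) = Pr x"
  shows "card {x \<in> N. Pr x} = (card (UNIV :: 'a set) - 1) * card {y \<in> Nbar. Pr y}"
proof -
  let ?f = "\<lambda>(\<alpha>, y). smult_col \<alpha> y"
  let ?D = "(UNIV - {0 :: 'a}) \<times> {y \<in> Nbar. Pr y}"
  have inj: "inj_on ?f ?D"
  proof (rule inj_onI)
    fix p q assume p: "p \<in> ?D" and q: "q \<in> ?D" and eq_pq: "?f p = ?f q"
    obtain a y b y' where pq: "p = (a, y)" "q = (b, y')" by (cases p, cases q)
    have ab: "a \<noteq> 0" "b \<noteq> 0" and y: "y \<in> Nbar" and y': "y' \<in> Nbar"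
      using p q pq by auto
    have eq: "smult_col a y = smult_col b y'" using eq_pq pq by simp
    then have "y' = smult_col (inverse b * a) y"
      using ab by (metis smult_col_smult_col smult_col_one left_inverse)
    then have "y' = y" using eq_if_proportional[OF y y'] ab by simp
    moreover have "a = b"
    proof (rule smult_col_cancel)
      show "y \<noteq> (\<lambda>_. 0, \<lambda>_. 0, \<lambda>_. 0)" using zero_notin Nbar_subset y by blast
      show "smult_col a y = smult_col b y" using eq \<open>y' = y\<close> by simp
    qed
    ultimately show "p = q" using pq by simp
  qed
  have image: "?f ` ?D = {x \<in> N. Pr x}"
  proof
    show "?f ` ?D \<subseteq> {x \<in> N. Pr x}"
      using smult_closed Nbar_subset invariant by auto
    show "{x \<in> N. Pr x} \<subseteq> ?f ` ?D"
    proof clarify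
      fix x assume x: "x \<in> N" "Pr x"
      obtain \<alpha> where \<alpha>: "\<alpha> \<noteq> 0" "smult_col \<alpha> x \<in> Nbar"
        using representative[OF x(1)] by blast
      have "x = ?f (inverse \<alpha>, smult_col \<alpha> x)"
        using \<alpha>(1) by (simp add: smult_col_smult_col)
      moreover have "(inverse \<alpha>, smult_col \<alpha> x) \<in> ?D"
        using \<alpha> x invariant by simp
      ultimately show "x \<in> ?f ` ?D" by (rule image_eqI)
    qed
  qed
  have "card {x \<in> N. Pr x} = card ?D"
    using card_image[OF inj] image by simp
  then show ?thesis
    by (simp add: card_cartesian_product card_Diff_singleton)
qed

text \<open>The columns of \<open>Nbar\<close> are nonzero and pairwise non-proportional, so no one or two of them
  are linearly dependent.\<close>
lemma projective_code_of:
  assumes fin: "finite N" and cols: "N \<subseteq> vecs m \<times> vecs m \<times> vecs m"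
  shows "projective Nbar (code_of m Nbar)"
  unfolding projective_def
proof (intro ballI impI)
  fix y assume y: "y \<in> dual_code Nbar (code_of m Nbar)" and "y \<noteq> 0"
  let ?Y = "{c \<in> Nbar. y c \<noteq> 0}"
  have fin_Y: "finite ?Y" using finite_subset[OF Nbar_subset fin] by simp
  have Y_cols: "?Y \<subseteq> vecs m \<times> vecs m \<times> vecs m" using Nbar_subset cols by blast
  obtain c where "y c \<noteq> 0" using \<open>y \<noteq> 0\<close> by (auto simp: fun_eq_iff)
  with y have "?Y \<noteq> {}" unfolding dual_code_def by blast
  have orth: "(\<Sum>c\<in>?Y. y c * coord k i c) = 0" if "k < 3" "i \<in> {1..m}" for k i
  proof -
    have "\<forall>f\<in>code_of m Nbar. (\<Sum>c\<in>Nbar. y c * f c) = 0"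
      using y by (simp add: dual_code_def)
    moreover have "gen_row Nbar (k, i) \<in> code_of m Nbar"
      using that by (intro gen_row_in_code_of) simp
    ultimately have "(\<Sum>c\<in>Nbar. y c * gen_row Nbar (k, i) c) = 0" by blast
    then have "(\<Sum>c\<in>Nbar. y c * coord k i c) = 0"
      by (simp add: gen_row_def)
    moreover have "(\<Sum>c\<in>Nbar. y c * coord k i c) = (\<Sum>c\<in>?Y. y c * coord k i c)"
      by (rule sum.mono_neutral_right) (use finite_subset[OF Nbar_subset fin] in auto)
    ultimately show ?thesis by simp
  qed
  show "hweight Nbar y \<ge> 3"
  proof (rule ccontr)
    assume "\<not> hweight Nbar y \<ge> 3"
    moreover have "card ?Y \<noteq> 0" using \<open>?Y \<noteq> {}\<close> fin_Y by simp
    ultimately have "card ?Y = 1 \<or> card ?Y = 2" unfolding hweight_def by linarith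
    then show False
    proof
      assume "card ?Y = 1"
      then obtain c where Y: "?Y = {c}" by (rule card_1_singletonE)
      have "y c \<noteq> 0" using Y by auto
      have "c = (\<lambda>_. 0, \<lambda>_. 0, \<lambda>_. 0)"
      proof (rule col_eqI[of _ m])
        show "c \<in> vecs m \<times> vecs m \<times> vecs m" using Y Y_cols by blast
        show "(\<lambda>_. 0, \<lambda>_. 0, \<lambda>_. 0) \<in> vecs m \<times> vecs m \<times> vecs m" by (simp add: vecs_def)
        fix k i :: nat assume "k < 3" "i \<in> {1..m}"
        then have "y c * coord k i c = 0" using orth Y by simp
        then show "coord k i c = coord k i (\<lambda>_. 0, \<lambda>_. 0, \<lambda>_. 0)"
          using \<open>y c \<noteq> 0\<close> by (simp add: coord_def)
      qed
      then show False using Y Nbar_subset zero_notin by blast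
    next
      assume "card ?Y = 2"
      then obtain c c' where Y: "?Y = {c, c'}" "c \<noteq> c'" by (auto simp: card_2_iff)
      define \<beta> where "\<beta> = - y c' / y c"
      have "y c \<noteq> 0" "y c' \<noteq> 0" "c \<in> Nbar" "c' \<in> Nbar" using Y by auto
      then have "\<beta> \<noteq> 0" by (simp add: \<beta>_def)
      have "c = smult_col \<beta> c'"
      proof (rule col_eqI[of _ m])
        show "c \<in> vecs m \<times> vecs m \<times> vecs m" using Y Y_cols by blast
        have "c' \<in> vecs m \<times> vecs m \<times> vecs m" using Y Y_cols by blast
        then show "smult_col \<beta> c' \<in> vecs m \<times> vecs m \<times> vecs m"
          by (cases c') (auto simp: vecs_def)
        fix k i :: nat assume "k < 3" "i \<in> {1..m}"
        then have "y c * coord k i c + y c' * coord k i c' = 0" using orth Y by simp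
        then show "coord k i c = coord k i (smult_col \<beta> c')"
          using \<open>y c \<noteq> 0\<close> by (simp add: \<beta>_def field_simps add_eq_0_iff)
      qed
      then show False
        using eq_if_proportional[OF \<open>c' \<in> Nbar\<close> \<open>c \<in> Nbar\<close> _ \<open>\<beta> \<noteq> 0\<close>] Y(2) by blast
    qed
  qed
qed

end

section \<open>The columns of \<open>N2\<close>\<close>

definition N2_col :: "bool \<times> (nat \<Rightarrow> 'a) \<times> (nat \<Rightarrow> 'a) \<times> (nat \<Rightarrow> 'a) \<Rightarrow> 'a::field col" where
  "N2_col = (\<lambda>(e, w1, w2, w3). ((\<lambda>i. w2 i + (if e then w1 i else 0)), w3, w1))"

lemma N2_eq_image: "N2 m A B C = N2_col ` (UNIV \<times> Deltac m A \<times> Delta m B \<times> Delta m C)"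
proof (rule set_eqI)
  fix x :: "'a col"
  have choice_of_\<omega>: "(\<exists>\<omega>. \<omega> \<in> {\<lambda>i. 0, w1} \<and> x = ((\<lambda>i. w2 i + \<omega> i), w3, w1)) \<longleftrightarrow>
      (\<exists>e. x = N2_col (e, w1, w2, w3))" for w1 w2 w3 :: "nat \<Rightarrow> 'a"
  proof
    assume "\<exists>\<omega>. \<omega> \<in> {\<lambda>i. 0, w1} \<and> x = ((\<lambda>i. w2 i + \<omega> i), w3, w1)"
    then show "\<exists>e. x = N2_col (e, w1, w2, w3)"
      by (auto simp: N2_col_def intro: exI[of _ True] exI[of _ False])
  next
    assume "\<exists>e. x = N2_col (e, w1, w2, w3)"
    then obtain e where "x = N2_col (e, w1, w2, w3)" ..
    then show "\<exists>\<omega>. \<omega> \<in> {\<lambda>i. 0, w1} \<and> x = ((\<lambda>i. w2 i + \<omega> i), w3, w1)"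
      by (intro exI[of _ "if e then w1 else (\<lambda>i. 0)"]) (auto simp: N2_col_def)
  qed
  have "x \<in> N2 m A B C \<longleftrightarrow> (\<exists>w1 w2 w3. w1 \<in> Deltac m A \<and> w2 \<in> Delta m B \<and> w3 \<in> Delta m C \<and>
      (\<exists>\<omega>. \<omega> \<in> {\<lambda>i. 0, w1} \<and> x = ((\<lambda>i. w2 i + \<omega> i), w3, w1)))"
    unfolding N2_def mem_Collect_eq by fast
  also have "\<dots> \<longleftrightarrow> x \<in> N2_col ` (UNIV \<times> Deltac m A \<times> Delta m B \<times> Delta m C)"
    unfolding choice_of_\<omega> by auto
  finally show "x \<in> N2 m A B C \<longleftrightarrow> x \<in> N2_col ` (UNIV \<times> Deltac m A \<times> Delta m B \<times> Delta m C)" .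
qed

lemma lincomb_N2_col:
  "lincomb m t (N2_col (e, w1, w2, w3)) =
    (\<Sum>i\<in>{1..m}. t (0, i) * w2 i + t (1, i) * w3 i + (t (2, i) + (if e then t (0, i) else 0)) * w1 i)"
  unfolding N2_col_def prod.case lincomb_expand by (rule sum.cong) (auto simp: algebra_simps)

lemma lincomb_N2_col_translate:
  "lincomb m t (N2_col (e, \<lambda>i. w1 i + d * u1 i, \<lambda>i. w2 i + d * u2 i, \<lambda>i. w3 i + d * u3 i)) =
    lincomb m t (N2_col (e, w1, w2, w3)) + d * lincomb m t (N2_col (e, u1, u2, u3))"
  unfolding lincomb_N2_col sum_distrib_left sum.distrib[symmetric]
  by (rule sum.cong) (auto simp: algebra_simps)

locale N2_code =
  fixes m :: nat and A C :: "nat set" and Nbar :: "'a::{field,finite} col set" and j :: nat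
  assumes card_field: "card (UNIV :: 'a set) = 4"
    and m_ge_2: "m \<ge> 2"
    and A_sub: "A \<subseteq> {1..m}" and C_sub: "C \<subseteq> {1..m}"
    and A_compl: "{1..m} - A = {j}"
    and projection: "is_projection_set (N2 m A A C) Nbar"
begin

abbreviation N\<^sub>2 :: "'a col set" where
  "N\<^sub>2 \<equiv> N2 m A A C"

abbreviation params :: "(bool \<times> (nat \<Rightarrow> 'a) \<times> (nat \<Rightarrow> 'a) \<times> (nat \<Rightarrow> 'a)) set" where
  "params \<equiv> UNIV \<times> Deltac m A \<times> Delta m A \<times> Delta m C"

text \<open>The length \<open>\<theta>\<close> of the code is \<open>8 * \<rho>\<close>.\<close>
definition \<rho> :: nat where
  "\<rho> = 4 ^ (2 * m + card C - 3)"

lemma \<rho>_pos: "\<rho> > 0"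
  by (simp add: \<rho>_def)

lemma j_mem: "j \<in> {1..m}" "j \<notin> A"
  using A_compl by auto

lemma card_A: "card A = m - 1"
proof -
  have "card ({1..m} - A) = m - card A"
    using A_sub finite_subset[OF A_sub] by (simp add: card_Diff_subset)
  then show ?thesis using A_compl by simp
qed

lemma Deltac_iff: "w \<in> Deltac m A \<longleftrightarrow> w \<in> vecs m \<and> w j \<noteq> 0"
  using A_compl unfolding Deltac_def Delta_def supp_def vecs_def by auto

lemma Delta_A_at_j: "w \<in> Delta m A \<Longrightarrow> w j = 0"
  using j_mem by (auto simp: Delta_def supp_def)

lemma inj_on_N2_col: "inj_on N2_col params"
proof (rule inj_onI)
  fix p p' assume p: "p \<in> params" and p': "p' \<in> params" and eq: "N2_col p = N2_col p'"
  obtain e w1 w2 w3 e' w1' w2' w3' where pp': "p = (e, w1, w2, w3)" "p' = (e', w1', w2', w3')"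
    by (cases p, cases p')
  have "w3 = w3'" "w1 = w1'"
    and sum_eq: "\<And>i. w2 i + (if e then w1 i else 0) = w2' i + (if e' then w1' i else 0)"
    using eq by (auto simp: pp' N2_col_def fun_eq_iff)
  moreover have "e = e'"
    using sum_eq[of j] \<open>w1 = w1'\<close> p p' pp'
    by (auto simp: Deltac_iff Delta_A_at_j split: if_splits)
  moreover have "w2 = w2'"
    using sum_eq \<open>w1 = w1'\<close> \<open>e = e'\<close> by (auto simp: fun_eq_iff)
  ultimately show "p = p'" by (simp add: pp')
qed

lemma finite_params: "finite params"
  using finite_Deltac[OF A_sub] finite_Delta[OF A_sub] finite_Delta[OF C_sub]
  by (intro finite_cartesian_product) auto

lemma card_params: "card params = 24 * \<rho>"
proof -
  obtain k where m: "m = k + 2" using m_ge_2 by (metis add.commute le_Suc_ex)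
  have "card params = 2 * ((4 ^ m - 4 ^ card A) * (4 ^ card A * 4 ^ card C))"
    by (simp add: card_cartesian_product card_Deltac[OF A_sub] card_Delta[OF A_sub]
        card_Delta[OF C_sub] card_field)
  also have "\<dots> = 24 * 4 ^ (2 * k + 1 + card C)"
    by (simp add: card_A m power_add power_mult power2_eq_square algebra_simps)
  moreover have "\<rho> = 4 ^ (2 * k + 1 + card C)"
    unfolding \<rho>_def by (simp add: m)
  ultimately show ?thesis by simp
qed

lemma N2_smult_col: "x \<in> N\<^sub>2 \<Longrightarrow> \<alpha> \<noteq> 0 \<Longrightarrow> smult_col \<alpha> x \<in> N\<^sub>2"
proof -
  assume "x \<in> N\<^sub>2" and "\<alpha> \<noteq> 0"
  then obtain e w1 w2 w3 where p: "(e, w1, w2, w3) \<in> params" and x: "x = N2_col (e, w1, w2, w3)"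
    unfolding N2_eq_image by auto
  have "smult_col \<alpha> x = N2_col (e, \<lambda>i. \<alpha> * w1 i, \<lambda>i. \<alpha> * w2 i, \<lambda>i. \<alpha> * w3 i)"
    by (cases e) (simp_all add: x N2_col_def algebra_simps)
  moreover have "(e, \<lambda>i. \<alpha> * w1 i, \<lambda>i. \<alpha> * w2 i, \<lambda>i. \<alpha> * w3 i) \<in> params"
    using p \<open>\<alpha> \<noteq> 0\<close> by (auto simp: Deltac_iff Delta_def vecs_def supp_def)
  ultimately show ?thesis unfolding N2_eq_image by blast
qed

lemma N2_third_at_j: "x \<in> N\<^sub>2 \<Longrightarrow> snd (snd x) j \<noteq> 0"
  unfolding N2_eq_image by (auto simp: N2_col_def Deltac_iff)

sublocale projection_set N\<^sub>2 Nbar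
proof
  show "is_projection_set N\<^sub>2 Nbar" by (rule projection)
  show "\<And>x \<alpha>. x \<in> N\<^sub>2 \<Longrightarrow> \<alpha> \<noteq> 0 \<Longrightarrow> smult_col \<alpha> x \<in> N\<^sub>2"
    by (rule N2_smult_col)
  show "(\<lambda>_. 0, \<lambda>_. 0, \<lambda>_. 0) \<notin> N\<^sub>2"
    using N2_third_at_j by fastforce
qed

lemma finite_N2: "finite N\<^sub>2"
  unfolding N2_eq_image using finite_params by simp

lemma N2_cols: "N\<^sub>2 \<subseteq> vecs m \<times> vecs m \<times> vecs m"
proof
  fix x assume "x \<in> N\<^sub>2"
  then obtain e w1 w2 w3 where p: "(e, w1, w2, w3) \<in> params" and x: "x = N2_col (e, w1, w2, w3)"
    unfolding N2_eq_image by auto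
  have "w1 \<in> vecs m" "w2 \<in> vecs m" "w3 \<in> vecs m"
    using p by (auto simp: Deltac_iff Delta_def)
  moreover have "(\<lambda>i. w2 i + (if e then w1 i else 0)) \<in> vecs m"
    unfolding vecs_def
  proof (intro CollectI allI impI)
    fix i assume "w2 i + (if e then w1 i else 0) \<noteq> 0"
    then have "w2 i \<noteq> 0 \<or> w1 i \<noteq> 0" by (auto split: if_splits)
    then show "i \<in> {1..m}" using \<open>w1 \<in> vecs m\<close> \<open>w2 \<in> vecs m\<close> unfolding vecs_def by blast
  qed
  ultimately show "x \<in> vecs m \<times> vecs m \<times> vecs m"
    by (simp add: x N2_col_def)
qed

lemma card_Nbar: "card Nbar = 8 * \<rho>"
proof -
  have "card N\<^sub>2 = 3 * card Nbar"
    using card_filter[of "\<lambda>_. True"] card_field by simp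
  moreover have "card N\<^sub>2 = 24 * \<rho>"
    unfolding N2_eq_image card_image[OF inj_on_N2_col] by (rule card_params)
  ultimately show ?thesis by simp
qed

abbreviation wt :: "(nat \<times> nat \<Rightarrow> 'a) \<Rightarrow> nat" where
  "wt t \<equiv> hweight Nbar (code_word m Nbar t)"

lemma wt_eq_card_params: "3 * wt t = card {p \<in> params. lincomb m t (N2_col p) \<noteq> 0}"
proof -
  have "wt t = card {y \<in> Nbar. lincomb m t y \<noteq> 0}"
    unfolding hweight_def code_word_def by (rule arg_cong[where f = card]) auto
  moreover have "card {x \<in> N\<^sub>2. lincomb m t x \<noteq> 0} = (card (UNIV :: 'a set) - 1) * card {y \<in> Nbar. lincomb m t y \<noteq> 0}"
    by (rule card_filter) (simp add: lincomb_smult_col)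
  moreover have "{x \<in> N\<^sub>2. lincomb m t x \<noteq> 0} = N2_col ` {p \<in> params. lincomb m t (N2_col p) \<noteq> 0}"
    unfolding N2_eq_image by auto
  moreover have "card (N2_col ` {p \<in> params. lincomb m t (N2_col p) \<noteq> 0}) =
      card {p \<in> params. lincomb m t (N2_col p) \<noteq> 0}"
    by (rule card_image) (rule inj_on_subset[OF inj_on_N2_col], auto)
  ultimately show ?thesis using card_field by simp
qed

text \<open>Translating the parameters along a direction on which the linear form takes the value 1
  shifts its values, so they are equidistributed over the field.\<close>
lemma card_nonzero_if_direction:
  assumes u1: "u1 \<in> vecs m" "u1 j = 0" and u2: "u2 \<in> Delta m A" and u3: "u3 \<in> Delta m C"
    and one: "\<And>e. lincomb m t (N2_col (e, u1, u2, u3)) = 1"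
  shows "4 * card {p \<in> params. lincomb m t (N2_col p) \<noteq> 0} = 3 * card params"
proof -
  define \<tau> where "\<tau> d = (\<lambda>(e :: bool, w1, w2, w3).
      (e, \<lambda>i. w1 i + d * u1 i, \<lambda>i. w2 i + d * u2 i, \<lambda>i. w3 i + d * u3 i))" for d :: 'a
  have "card (UNIV :: 'a set) * card {p \<in> params. lincomb m t (N2_col p) \<noteq> 0} =
      (card (UNIV :: 'a set) - 1) * card params"
  proof (rule card_nonzero_if_shift_action[OF finite_params, of \<tau>])
    fix d and p assume p: "p \<in> params"
    obtain e w1 w2 w3 where p_eq: "p = (e, w1, w2, w3)" by (cases p)
    have "(\<lambda>i. w1 i + d * u1 i) \<in> vecs m"
      using Delta_add_scaled[of "{1..m}" m w1 u1 d] p u1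
      unfolding Delta_full by (simp add: p_eq Deltac_iff)
    moreover have "w2 \<in> Delta m A" "w3 \<in> Delta m C" using p by (simp_all add: p_eq)
    ultimately show "\<tau> d p \<in> params"
      using p u1 Delta_add_scaled[OF A_sub _ u2] Delta_add_scaled[OF C_sub _ u3]
      by (simp add: \<tau>_def p_eq Deltac_iff)
    show "lincomb m t (N2_col (\<tau> d p)) = lincomb m t (N2_col p) + d"
      by (simp add: \<tau>_def p_eq lincomb_N2_col_translate one)
    show "\<tau> (- d) (\<tau> d p) = p"
      by (simp add: \<tau>_def p_eq algebra_simps)
  qed
  then show ?thesis using card_field by simp
qed

text \<open>A nondegenerate form involves a coordinate that varies freely over \<open>params\<close>.\<close>
definition nondegenerate :: "(nat \<times> nat \<Rightarrow> 'a) \<Rightarrow> bool" where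
  "nondegenerate t \<longleftrightarrow> (\<exists>i\<in>A. t (0, i) \<noteq> 0) \<or> (\<exists>i\<in>C. t (1, i) \<noteq> 0) \<or> (\<exists>i\<in>A. t (2, i) \<noteq> 0)"

lemma wt_nondegenerate:
  assumes "nondegenerate t" shows "wt t = 6 * \<rho>"
proof -
  let ?\<delta> = "\<lambda>i c k. if k = i then c else (0 :: 'a)"
  have vec: "?\<delta> i c \<in> Delta m P" if "i \<in> P" "P \<subseteq> {1..m}" for i c P
    using that by (simp add: Delta_eq)
  have \<delta>_in: "?\<delta> i c \<in> vecs m" "?\<delta> i c j = 0" if "i \<in> A" for i c
    using vec[of i A] that A_sub j_mem by (auto simp: Delta_def)
  txt \<open>Along an entry \<open>i \<noteq> j\<close> of \<open>w1\<close> the form changes at rate \<open>t (2, i) + e * t (0, i)\<close>,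
    which is independent of \<open>e\<close> only once the first case is excluded.\<close>
  consider (first) i where "i \<in> A" "t (0, i) \<noteq> 0"
    | (second) i where "i \<in> C" "t (1, i) \<noteq> 0"
    | (third) i where "i \<in> A" "t (2, i) \<noteq> 0" "\<forall>i\<in>A. t (0, i) = 0"
    using assms unfolding nondegenerate_def by blast
  then have "4 * card {p \<in> params. lincomb m t (N2_col p) \<noteq> 0} = 3 * card params"
  proof cases
    case first
    then show ?thesis
      using A_sub vec[of i A]
      by (intro card_nonzero_if_direction[of "\<lambda>_. 0" "?\<delta> i (inverse (t (0, i)))" "\<lambda>_. 0"])
        (auto simp: vecs_def Delta_def supp_def lincomb_N2_col sum_times_delta)
  next
    case second
    then show ?thesis
      using C_sub vec[of i C]
      by (intro card_nonzero_if_direction[of "\<lambda>_. 0" "\<lambda>_. 0" "?\<delta> i (inverse (t (1, i)))"])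
        (auto simp: vecs_def Delta_def supp_def lincomb_N2_col sum_times_delta)
  next
    case third
    then show ?thesis
      using A_sub \<delta>_in[of i]
      by (intro card_nonzero_if_direction[of "?\<delta> i (inverse (t (2, i)))" "\<lambda>_. 0" "\<lambda>_. 0"])
        (auto simp: Delta_def vecs_def supp_def lincomb_N2_col sum_times_delta)
  qed
  then show ?thesis
    using wt_eq_card_params[of t] card_params by simp
qed

lemma lincomb_degenerate:
  assumes "\<not> nondegenerate t" and p: "(e, w1, w2, w3) \<in> params"
  shows "lincomb m t (N2_col (e, w1, w2, w3)) = (t (2, j) + (if e then t (0, j) else 0)) * w1 j"
proof -
  have w3_out: "w3 i = 0" if "i \<notin> C" for i
    using p that by (auto simp: Delta_def supp_def)
  have summand: "t (0, i) * w2 i + t (1, i) * w3 i + (t (2, i) + (if e then t (0, i) else 0)) * w1 i =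
      (if i = j then (t (2, j) + (if e then t (0, j) else 0)) * w1 j else 0)" if "i \<in> {1..m}" for i
  proof -
    have "t (1, i) * w3 i = 0"
      using assms(1) w3_out unfolding nondegenerate_def by (cases "i \<in> C") auto
    moreover have "w2 j = 0" using p by (auto intro: Delta_A_at_j)
    moreover have "t (0, i) = 0 \<and> t (2, i) = 0" if "i \<noteq> j"
      using assms(1) A_compl \<open>i \<in> {1..m}\<close> that unfolding nondegenerate_def by blast
    ultimately show ?thesis by auto
  qed
  have "lincomb m t (N2_col (e, w1, w2, w3)) =
      (\<Sum>i\<in>{1..m}. if i = j then (t (2, j) + (if e then t (0, j) else 0)) * w1 j else 0)"
    unfolding lincomb_N2_col by (rule sum.cong[OF refl]) (rule summand)
  then show ?thesis using j_mem by simp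
qed

lemma wt_degenerate:
  assumes "\<not> nondegenerate t"
  shows "wt t = 4 * \<rho> * (of_bool (t (2, j) \<noteq> 0) + of_bool (t (2, j) + t (0, j) \<noteq> 0))"
proof -
  let ?Q = "(Deltac m A \<times> Delta m A \<times> Delta m C) :: ((nat \<Rightarrow> 'a) \<times> (nat \<Rightarrow> 'a) \<times> (nat \<Rightarrow> 'a)) set"
  have card_Q: "card ?Q = 12 * \<rho>"
    using card_params by (simp add: card_cartesian_product ac_simps)
  let ?X = "if t (2, j) \<noteq> 0 then {False} \<times> ?Q else {}"
    and ?Y = "if t (2, j) + t (0, j) \<noteq> 0 then {True} \<times> ?Q else {}"
  have "{p \<in> params. lincomb m t (N2_col p) \<noteq> 0} = ?X \<union> ?Y"
    using lincomb_degenerate[OF assms] by (auto simp: Deltac_iff add.commute split: if_splits)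
  moreover have "finite ?Q"
    using finite_Deltac[OF A_sub] finite_Delta[OF A_sub] finite_Delta[OF C_sub]
    by (intro finite_cartesian_product)
  then have "card (?X \<union> ?Y) = card ?X + card ?Y"
    by (intro card_Un_disjoint) auto
  ultimately have "card {p \<in> params. lincomb m t (N2_col p) \<noteq> 0} =
      card ?Q * (of_bool (t (2, j) \<noteq> 0) + of_bool (t (2, j) + t (0, j) \<noteq> 0))"
    by (simp add: card_cartesian_product algebra_simps)
  then show ?thesis
    using wt_eq_card_params[of t] card_Q by simp
qed

definition active :: "(nat \<times> nat) set" where
  "active = {0} \<times> {1..m} \<union> {1} \<times> C \<union> {2} \<times> {1..m}"

definition coeffs :: "(nat \<times> nat \<Rightarrow> 'a) set" where
  "coeffs = {t. \<forall>p. p \<notin> active \<longrightarrow> t p = 0}"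

lemma finite_active: "finite active"
  using finite_subset[OF C_sub] by (simp add: active_def)

lemma active_subset: "active \<subseteq> {..<3} \<times> {1..m}"
  using C_sub by (auto simp: active_def)

lemma card_active: "card active = 2 * m + card C"
proof -
  have "card active = card ({0 :: nat} \<times> {1..m} \<union> {1} \<times> C) + card ({2 :: nat} \<times> {1..m})"
    unfolding active_def by (rule card_Un_disjoint) (use finite_subset[OF C_sub] in auto)
  also have "card ({0 :: nat} \<times> {1..m} \<union> {1} \<times> C) = card ({0 :: nat} \<times> {1..m}) + card ({1 :: nat} \<times> C)"
    by (rule card_Un_disjoint) (use finite_subset[OF C_sub] in auto)
  finally show ?thesis by (simp add: card_cartesian_product)
qed

lemma finite_coeffs: "finite coeffs" and card_coeffs: "card coeffs = 4 ^ (2 * m + card C)"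
  unfolding coeffs_def
  using card_vanishing_outside[OF finite_active, where 'a = 'a]
    finite_vanishing_outside[OF finite_active, where 'a = 'a]
  by (simp_all add: card_active card_field)

text \<open>Coefficients of the middle block outside \<open>C\<close> act on coordinates that vanish on \<open>N\<^sub>2\<close>.\<close>
lemma code_word_restrict_active:
  "code_word m Nbar t = code_word m Nbar (\<lambda>p. if p \<in> active then t p else 0)"
proof
  fix c
  show "code_word m Nbar t c = code_word m Nbar (\<lambda>p. if p \<in> active then t p else 0) c"
  proof (cases "c \<in> Nbar")
    case True
    then obtain e w1 w2 w3 where p: "(e, w1, w2, w3) \<in> params" and c: "c = N2_col (e, w1, w2, w3)"
      using Nbar_subset unfolding N2_eq_image by auto
    have "w3 i = 0" if "i \<notin> C" for i
      using p that by (auto simp: Delta_def supp_def)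
    then show ?thesis
      using True unfolding code_word_def c lincomb_N2_col active_def
      by (auto intro!: sum.cong)
  qed (simp add: code_word_def)
qed

lemma code_of_eq_image_coeffs: "code_of m Nbar = code_word m Nbar ` coeffs"
proof -
  have "code_word m Nbar t \<in> code_word m Nbar ` coeffs" for t
    using code_word_restrict_active[of t]
    by (intro image_eqI[of _ _ "\<lambda>p. if p \<in> active then t p else 0"]) (auto simp: coeffs_def)
  then show ?thesis unfolding code_of_eq_range_code_word by auto
qed

definition degenerate_coeffs :: "'a \<Rightarrow> 'a \<Rightarrow> nat \<times> nat \<Rightarrow> 'a" where
  "degenerate_coeffs a c = (\<lambda>p. if p = (0, j) then a else if p = (2, j) then c else 0)"

lemma degenerate_coeffs_apply [simp]:
  "degenerate_coeffs a c (0, j) = a" "degenerate_coeffs a c (2, j) = c"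
  by (simp_all add: degenerate_coeffs_def)

lemma degenerate_coeffs_mem: "degenerate_coeffs a c \<in> coeffs"
  using j_mem by (auto simp: degenerate_coeffs_def coeffs_def active_def)

lemma degenerate_coeffs_degenerate: "\<not> nondegenerate (degenerate_coeffs a c)"
  using j_mem by (auto simp: degenerate_coeffs_def nondegenerate_def)

lemma degenerate_eq_degenerate_coeffs:
  assumes "t \<in> coeffs" "\<not> nondegenerate t"
  shows "t = degenerate_coeffs (t (0, j)) (t (2, j))"
proof
  fix p :: "nat \<times> nat"
  show "t p = degenerate_coeffs (t (0, j)) (t (2, j)) p"
  proof (cases "p \<in> active")
    case False
    then have "t p = 0" using assms(1) unfolding coeffs_def by blast
    moreover have "p \<noteq> (0, j)" "p \<noteq> (2, j)" using False j_mem by (auto simp: active_def)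
    ultimately show ?thesis by (simp add: degenerate_coeffs_def)
  next
    case True
    then show ?thesis
      using assms(2) A_compl unfolding nondegenerate_def degenerate_coeffs_def active_def by auto
  qed
qed

lemma wt_degenerate_coeffs:
  "wt (degenerate_coeffs a c) = 4 * \<rho> * (of_bool (c \<noteq> 0) + of_bool (c + a \<noteq> 0))"
  using wt_degenerate[OF degenerate_coeffs_degenerate] by simp

lemma eq_zero_if_wt_eq_zero:
  assumes "t \<in> coeffs" "wt t = 0"
  shows "t = (\<lambda>p. 0)"
proof (cases "nondegenerate t")
  case True
  then show ?thesis using wt_nondegenerate \<rho>_pos assms(2) by simp
next
  case False
  then have "t (2, j) = 0" "t (0, j) = 0"
    using wt_degenerate[OF False] \<rho>_pos assms(2) by auto
  then show ?thesis
    using degenerate_eq_degenerate_coeffs[OF assms(1) False]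
    by (simp add: degenerate_coeffs_def fun_eq_iff)
qed

lemma inj_on_code_word: "inj_on (code_word m Nbar) coeffs"
proof (rule inj_onI)
  fix t t' assume t: "t \<in> coeffs" and t': "t' \<in> coeffs" and eq: "code_word m Nbar t = code_word m Nbar t'"
  have "code_word m Nbar (\<lambda>p. t p - t' p) = 0"
    unfolding code_word_diff eq by simp
  then have "wt (\<lambda>p. t p - t' p) = 0"
    by (simp add: hweight_def)
  moreover have "(\<lambda>p. t p - t' p) \<in> coeffs"
    using t t' by (simp add: coeffs_def)
  ultimately have "(\<lambda>p. t p - t' p) = (\<lambda>p. 0)"
    by (intro eq_zero_if_wt_eq_zero)
  then show "t = t'" by (simp add: fun_eq_iff)
qed

lemma weight_freq_eq_card_coeffs:
  "weight_freq Nbar (code_of m Nbar) w = card {t \<in> coeffs. t \<noteq> (\<lambda>p. 0) \<and> wt t = w}"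
proof -
  have "{f \<in> code_of m Nbar. f \<noteq> 0 \<and> hweight Nbar f = w} =
      code_word m Nbar ` {t \<in> coeffs. t \<noteq> (\<lambda>p. 0) \<and> wt t = w}"
    unfolding code_of_eq_image_coeffs
    using inj_on_code_word[THEN inj_onD, of _ "\<lambda>p. 0"] by (auto simp: coeffs_def)
  then show ?thesis
    unfolding weight_freq_def
    by (simp add: card_image inj_on_subset[OF inj_on_code_word])
qed

lemma wt_cases:
  assumes "t \<in> coeffs" "t \<noteq> (\<lambda>p. 0)"
  shows "wt t \<in> {4 * \<rho>, 6 * \<rho>, 8 * \<rho>}"
proof (cases "nondegenerate t")
  case True
  then show ?thesis by (simp add: wt_nondegenerate)
next
  case False
  have "wt t \<noteq> 0" using eq_zero_if_wt_eq_zero assms by blast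
  then show ?thesis using wt_degenerate[OF False] by auto
qed

lemma weight_class_degenerate:
  assumes "n \<in> {1, 2}"
  shows "{t \<in> coeffs. t \<noteq> (\<lambda>p. 0) \<and> wt t = 4 * \<rho> * n} =
    (\<lambda>(a, c). degenerate_coeffs a c) ` {(a, c). of_bool (c \<noteq> 0) + of_bool (c + a \<noteq> 0) = n}"
proof
  show "{t \<in> coeffs. t \<noteq> (\<lambda>p. 0) \<and> wt t = 4 * \<rho> * n} \<subseteq>
      (\<lambda>(a, c). degenerate_coeffs a c) ` {(a, c). of_bool (c \<noteq> 0) + of_bool (c + a \<noteq> 0) = n}"
  proof clarify
    fix t assume t: "t \<in> coeffs" "wt t = 4 * \<rho> * n"
    then have "\<not> nondegenerate t"
      using wt_nondegenerate \<rho>_pos assms by auto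
    then show "t \<in> (\<lambda>(a, c). degenerate_coeffs a c) ` {(a, c). of_bool (c \<noteq> 0) + of_bool (c + a \<noteq> 0) = n}"
      using degenerate_eq_degenerate_coeffs[OF t(1)] wt_degenerate t(2) \<rho>_pos
      by (intro image_eqI[of _ _ "(t (0, j), t (2, j))"]) (auto simp: add.commute)
  qed
  show "(\<lambda>(a, c). degenerate_coeffs a c) ` {(a, c). of_bool (c \<noteq> 0) + of_bool (c + a \<noteq> 0) = n} \<subseteq>
      {t \<in> coeffs. t \<noteq> (\<lambda>p. 0) \<and> wt t = 4 * \<rho> * n}"
  proof
    fix t assume "t \<in> (\<lambda>(a, c). degenerate_coeffs a c) `
        {(a, c). of_bool (c \<noteq> 0) + of_bool (c + a \<noteq> 0) = n}"
    then obtain a c where t: "t = degenerate_coeffs a c"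
      and n: "of_bool (c \<noteq> 0) + of_bool (c + a \<noteq> 0) = n" by auto
    then have "wt t = 4 * \<rho> * n"
      by (simp add: wt_degenerate_coeffs)
    moreover have "wt (\<lambda>p. 0) = 0" by (simp add: hweight_def)
    ultimately show "t \<in> {t \<in> coeffs. t \<noteq> (\<lambda>p. 0) \<and> wt t = 4 * \<rho> * n}"
      using degenerate_coeffs_mem t assms \<rho>_pos by auto
  qed
qed

lemma inj_on_degenerate_coeffs: "inj_on (\<lambda>(a, c). degenerate_coeffs a c) X"
  by (rule inj_onI) (metis case_prod_beta degenerate_coeffs_apply prod.expand)

lemma card_weight_class_degenerate:
  assumes "n \<in> {1, 2}"
  shows "card {t \<in> coeffs. t \<noteq> (\<lambda>p. 0) \<and> wt t = 4 * \<rho> * n} =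
    card {(a, c :: 'a). of_bool (c \<noteq> 0) + of_bool (c + a \<noteq> 0) = n}"
  unfolding weight_class_degenerate[OF assms] by (rule card_image[OF inj_on_degenerate_coeffs])

lemma weight_freq_half: "weight_freq Nbar (code_of m Nbar) (4 * \<rho>) = 6"
proof -
  have "weight_freq Nbar (code_of m Nbar) (4 * \<rho>) =
      card {(a, c :: 'a). of_bool (c \<noteq> 0) + of_bool (c + a \<noteq> 0) = (1::nat)}"
    using card_weight_class_degenerate[of 1] by (simp add: weight_freq_eq_card_coeffs)
  also have "\<dots> = 2 * (card (UNIV :: 'a set) - 1)"
    by (rule card_pairs_one_nonzero)
  finally show ?thesis using card_field by simp
qed

lemma weight_freq_full: "weight_freq Nbar (code_of m Nbar) (8 * \<rho>) = 9"
proof -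
  have "weight_freq Nbar (code_of m Nbar) (8 * \<rho>) =
      card {(a, c :: 'a). of_bool (c \<noteq> 0) + of_bool (c + a \<noteq> 0) = (2::nat)}"
    using card_weight_class_degenerate[of 2] by (simp add: weight_freq_eq_card_coeffs)
  also have "\<dots> = (card (UNIV :: 'a set) - 1)\<^sup>2"
    by (rule card_pairs_two_nonzero)
  finally show ?thesis using card_field by simp
qed

lemma weight_freq_middle: "weight_freq Nbar (code_of m Nbar) (6 * \<rho>) = 4 ^ (2 * m + card C) - 16"
proof -
  let ?W = "\<lambda>w. {t \<in> coeffs. t \<noteq> (\<lambda>p. 0) \<and> wt t = w}"
  have "coeffs - {\<lambda>p. 0} = ?W (4 * \<rho>) \<union> ?W (6 * \<rho>) \<union> ?W (8 * \<rho>)"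
    using wt_cases by auto
  moreover have "card (?W (4 * \<rho>) \<union> ?W (6 * \<rho>) \<union> ?W (8 * \<rho>)) =
      card (?W (4 * \<rho>)) + card (?W (6 * \<rho>)) + card (?W (8 * \<rho>))"
    using finite_coeffs \<rho>_pos by (subst card_Un_disjoint, auto)+
  moreover have "card (coeffs - {\<lambda>p. 0}) = 4 ^ (2 * m + card C) - 1"
    using finite_coeffs card_coeffs by (simp add: card_Diff_singleton coeffs_def)
  ultimately show ?thesis
    using weight_freq_half weight_freq_full by (simp add: weight_freq_eq_card_coeffs)
qed

lemma nonzero_weights_eq: "{hweight Nbar f | f. f \<in> code_of m Nbar \<and> f \<noteq> 0} = {4 * \<rho>, 6 * \<rho>, 8 * \<rho>}"
proof
  show "{hweight Nbar f | f. f \<in> code_of m Nbar \<and> f \<noteq> 0} \<subseteq> {4 * \<rho>, 6 * \<rho>, 8 * \<rho>}"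
  proof
    fix w assume "w \<in> {hweight Nbar f | f. f \<in> code_of m Nbar \<and> f \<noteq> 0}"
    then obtain t where "t \<in> coeffs" "code_word m Nbar t \<noteq> 0" "w = wt t"
      unfolding code_of_eq_image_coeffs by auto
    moreover from this have "t \<noteq> (\<lambda>p. 0)" by auto
    ultimately show "w \<in> {4 * \<rho>, 6 * \<rho>, 8 * \<rho>}" using wt_cases by blast
  qed
  have "(16 :: nat) < 4 ^ (2 * m + card C)"
    using m_ge_2 power_strict_increasing[of 2 "2 * m + card C" "4 :: nat"] by simp
  then have "weight_freq Nbar (code_of m Nbar) w \<noteq> 0" if "w \<in> {4 * \<rho>, 6 * \<rho>, 8 * \<rho>}" for w
    using that weight_freq_half weight_freq_middle weight_freq_full by auto
  then show "{4 * \<rho>, 6 * \<rho>, 8 * \<rho>} \<subseteq> {hweight Nbar f | f. f \<in> code_of m Nbar \<and> f \<noteq> 0}"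
    using weight_freq_nonzero_imp_weight by blast
qed

lemma min_dist_eq: "min_dist Nbar (code_of m Nbar) = 4 * \<rho>"
  unfolding min_dist_def nonzero_weights_eq by simp

lemma gen_row_active_eq_code_word:
  "p \<in> active \<Longrightarrow> gen_row Nbar p = code_word m Nbar (\<lambda>q. if q = p then 1 else 0)"
  using active_subset by (intro gen_row_eq_code_word) auto

lemma code_word_eq_sum_active:
  "t \<in> coeffs \<Longrightarrow> code_word m Nbar t = (\<Sum>p\<in>active. fscale (t p) (gen_row Nbar p))"
  unfolding code_word_eq_sum_gen_rows
  using active_subset by (intro sum.mono_neutral_right) (auto simp: coeffs_def fscale_def)

lemma inj_on_gen_row_active: "inj_on (gen_row Nbar) active"
proof (rule inj_onI)
  fix p q assume "p \<in> active" "q \<in> active" "gen_row Nbar p = gen_row Nbar q"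
  then have "(\<lambda>r. if r = p then 1 else 0) = (\<lambda>r. if r = q then (1 :: 'a) else 0)"
    using inj_on_code_word[THEN inj_onD] gen_row_active_eq_code_word by (auto simp: coeffs_def)
  then show "p = q" by (metis one_neq_zero)
qed

lemma independent_gen_rows_active: "\<not> module.dependent fscale (gen_row Nbar ` active)"
proof
  assume "module.dependent fscale (gen_row Nbar ` active)"
  then obtain u where u: "\<exists>v\<in>gen_row Nbar ` active. u v \<noteq> 0"
    and sum_zero: "(\<Sum>v\<in>gen_row Nbar ` active. fscale (u v) v) = 0"
    using finite_active by (auto simp: module.dependent_finite[OF module_fscale])
  let ?t = "\<lambda>p. if p \<in> active then u (gen_row Nbar p) else 0"
  have "code_word m Nbar ?t = (\<Sum>v\<in>gen_row Nbar ` active. fscale (u v) v)"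
    by (simp add: code_word_eq_sum_active coeffs_def sum.reindex[OF inj_on_gen_row_active])
  then have "?t = (\<lambda>p. 0)"
    using sum_zero inj_on_code_word[THEN inj_onD, of ?t "\<lambda>p. 0"] by (simp add: coeffs_def)
  then show False
    using u by (auto simp: fun_eq_iff split: if_splits)
qed

lemma code_dim_eq: "code_dim (code_of m Nbar) = 2 * m + card C"
  unfolding code_dim_def
proof (rule vector_space.dim_unique[OF vector_space_fscale, where B = "gen_row Nbar ` active"])
  show "gen_row Nbar ` active \<subseteq> code_of m Nbar"
    unfolding code_of_eq_range_code_word using gen_row_active_eq_code_word by auto
  show "code_of m Nbar \<subseteq> module.span fscale (gen_row Nbar ` active)"
  proof
    fix f assume "f \<in> code_of m Nbar"
    then obtain t where t: "t \<in> coeffs" "f = code_word m Nbar t"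
      unfolding code_of_eq_image_coeffs by auto
    show "f \<in> module.span fscale (gen_row Nbar ` active)"
      unfolding t(2) code_word_eq_sum_active[OF t(1)]
      by (intro module.span_sum[OF module_fscale] module.span_scale[OF module_fscale]
          module.span_base[OF module_fscale]) auto
  qed
  show "card (gen_row Nbar ` active) = 2 * m + card C"
    by (simp add: card_image[OF inj_on_gen_row_active] card_active)
  show "\<not> module.dependent fscale (gen_row Nbar ` active)"
    by (rule independent_gen_rows_active)
qed

lemma code_projective: "projective Nbar (code_of m Nbar)"
  by (rule projective_code_of[OF finite_N2 N2_cols])

end

theorem mainTheorem13:
  fixes m :: nat and A B C :: "nat set"
    and Nbar :: "('a::{field,finite}) col set"
    and \<theta> :: nat
  assumes q4: "card (UNIV :: 'a set) = 4"
    and m2: "m \<ge> 2"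
    and A: "A \<noteq> {}" "A \<subseteq> {1..m}"
    and B: "B \<noteq> {}" "B \<subseteq> {1..m}"
    and C: "C \<noteq> {}" "C \<subseteq> {1..m}"
    and BA: "B = A"
    and cardA: "card A = m - 1"
    and Nbar: "is_projection_set (N2 m A B C) Nbar"
    and theta: "\<theta> = 2 ^ (4 * m + 2 * card C - 3)"
  shows "projective Nbar (code_of m Nbar)
    \<and> card Nbar = \<theta>
    \<and> code_dim (code_of m Nbar) = 2 * m + card C
    \<and> min_dist Nbar (code_of m Nbar) = \<theta> div 2
    \<and> {hweight Nbar f | f. f \<in> code_of m Nbar \<and> f \<noteq> 0} = {\<theta> div 2, 3 * \<theta> div 4, \<theta>}
    \<and> card {\<theta> div 2, 3 * \<theta> div 4, \<theta>} = 3
    \<and> weight_freq Nbar (code_of m Nbar) (\<theta> div 2) = 6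
    \<and> weight_freq Nbar (code_of m Nbar) (3 * \<theta> div 4) = 4 ^ (2 * m + card C) - 16
    \<and> weight_freq Nbar (code_of m Nbar) \<theta> = 9
    \<and> 4 * (\<theta> div 2 + 3 * \<theta> div 4 + \<theta>) = 9 * \<theta>"
proof -
  have "card ({1..m} - A) = 1"
    using A(2) cardA m2 by (simp add: card_Diff_subset finite_subset)
  then obtain j where "{1..m} - A = {j}" by (rule card_1_singletonE)
  then interpret N2_code m A C Nbar j
    using q4 m2 A(2) C Nbar BA by unfold_locales auto
  have "4 * m + 2 * card C - 3 = 3 + 2 * (2 * m + card C - 3)"
    using m2 by simp
  then have \<theta>: "\<theta> = 8 * \<rho>"
    unfolding theta \<rho>_def by (simp add: power_add power_mult)
  have "8 * \<rho> div 2 = 4 * \<rho>" "3 * (8 * \<rho>) div 4 = 6 * \<rho>" by simp_all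
  then show ?thesis
    unfolding \<theta> using code_projective card_Nbar code_dim_eq min_dist_eq nonzero_weights_eq \<rho>_pos
      weight_freq_half weight_freq_middle weight_freq_full
    by simp
qed

end
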